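(* Let $L$ be a finite-dimensional Lie algebra over a field $F$ and let $M$ be a maximal subalgebra of $L$. Then $M$ is a c-ideal of $L$ if and only if $\eta(L:M)=\dim(L/M)$.
   Context: For a subalgebra $B$ of $L$, $B_L$ denotes the core of $B$, the largest ideal of $L$ contained in $B$. A subalgebra $B$ is a c-ideal of $L$ if there is an ideal $C$ of $L$ with $L=B+C$ and $B\cap C\subseteq B_L$. For a nonzero subalgebra $X$, the strict core $k(X)$ is the sum of all ideals of $L$ that are proper subalgebras of $X$ (it is $0$ if there are none). A subalgebra $C$ is a completion of $M$ if $C\not\subseteq M$ but every proper subalgebra of $C$ that is an ideal of $L$ is contained in $M$; an ideal completion is a completion that is an ideal of $L$. The ideal index $\eta(L:M)$ is $\dim(C/k(C))$ for any ideal completion $C$ of $M$ (independent of the choice of $C$). *)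

theory Defs
  imports Complex_Main
begin

text \<open>A Lie algebra over a field 'a: the whole type 'b is the underlying space L,
  scalar multiplication s, Lie bracket br.\<close>

definition lie_algebra :: "('a::field \<Rightarrow> 'b::ab_group_add \<Rightarrow> 'b) \<Rightarrow> ('b \<Rightarrow> 'b \<Rightarrow> 'b) \<Rightarrow> bool" where
  "lie_algebra s br \<longleftrightarrow> vector_space s
     \<and> (\<forall>x y z. br (x + y) z = br x z + br y z)
     \<and> (\<forall>x y z. br x (y + z) = br x y + br x z)
     \<and> (\<forall>a x y. br (s a x) y = s a (br x y))
     \<and> (\<forall>a x y. br x (s a y) = s a (br x y))
     \<and> (\<forall>x. br x x = 0)
     \<and> (\<forall>x y z. br x (br y z) + br y (br z x) + br z (br x y) = 0)"

definition fin_dim :: "('a::field \<Rightarrow> 'b::ab_group_add \<Rightarrow> 'b) \<Rightarrow> bool" where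
  "fin_dim s \<longleftrightarrow> (\<exists>B. finite B \<and> module.span s B = UNIV)"

definition lie_subalgebra :: "('a::field \<Rightarrow> 'b::ab_group_add \<Rightarrow> 'b) \<Rightarrow> ('b \<Rightarrow> 'b \<Rightarrow> 'b) \<Rightarrow> 'b set \<Rightarrow> bool" where
  "lie_subalgebra s br B \<longleftrightarrow> module.subspace s B \<and> (\<forall>x\<in>B. \<forall>y\<in>B. br x y \<in> B)"

definition lie_ideal :: "('a::field \<Rightarrow> 'b::ab_group_add \<Rightarrow> 'b) \<Rightarrow> ('b \<Rightarrow> 'b \<Rightarrow> 'b) \<Rightarrow> 'b set \<Rightarrow> bool" where
  "lie_ideal s br I \<longleftrightarrow> module.subspace s I \<and> (\<forall>x. \<forall>y\<in>I. br x y \<in> I)"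

definition maximal_subalgebra :: "('a::field \<Rightarrow> 'b::ab_group_add \<Rightarrow> 'b) \<Rightarrow> ('b \<Rightarrow> 'b \<Rightarrow> 'b) \<Rightarrow> 'b set \<Rightarrow> bool" where
  "maximal_subalgebra s br M \<longleftrightarrow> lie_subalgebra s br M \<and> M \<noteq> UNIV
     \<and> (\<forall>B. lie_subalgebra s br B \<and> M \<subseteq> B \<longrightarrow> B = M \<or> B = UNIV)"

definition lie_core :: "('a::field \<Rightarrow> 'b::ab_group_add \<Rightarrow> 'b) \<Rightarrow> ('b \<Rightarrow> 'b \<Rightarrow> 'b) \<Rightarrow> 'b set \<Rightarrow> 'b set" where
  "lie_core s br B = module.span s (\<Union>{I. lie_ideal s br I \<and> I \<subseteq> B})"

definition c_ideal :: "('a::field \<Rightarrow> 'b::ab_group_add \<Rightarrow> 'b) \<Rightarrow> ('b \<Rightarrow> 'b \<Rightarrow> 'b) \<Rightarrow> 'b set \<Rightarrow> bool" where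
  "c_ideal s br B \<longleftrightarrow> lie_subalgebra s br B \<and>
     (\<exists>C. lie_ideal s br C \<and> {b + c | b c. b \<in> B \<and> c \<in> C} = UNIV \<and> B \<inter> C \<subseteq> lie_core s br B)"

definition strict_core :: "('a::field \<Rightarrow> 'b::ab_group_add \<Rightarrow> 'b) \<Rightarrow> ('b \<Rightarrow> 'b \<Rightarrow> 'b) \<Rightarrow> 'b set \<Rightarrow> 'b set" where
  "strict_core s br X = module.span s (\<Union>{I. lie_ideal s br I \<and> I \<subset> X})"

definition completion :: "('a::field \<Rightarrow> 'b::ab_group_add \<Rightarrow> 'b) \<Rightarrow> ('b \<Rightarrow> 'b \<Rightarrow> 'b) \<Rightarrow> 'b set \<Rightarrow> 'b set \<Rightarrow> bool" where
  "completion s br M C \<longleftrightarrow> lie_subalgebra s br C \<and> \<not> C \<subseteq> M \<and>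
     (\<forall>D. lie_subalgebra s br D \<and> D \<subset> C \<and> lie_ideal s br D \<longrightarrow> D \<subseteq> M)"

definition ideal_completion :: "('a::field \<Rightarrow> 'b::ab_group_add \<Rightarrow> 'b) \<Rightarrow> ('b \<Rightarrow> 'b \<Rightarrow> 'b) \<Rightarrow> 'b set \<Rightarrow> 'b set \<Rightarrow> bool" where
  "ideal_completion s br M C \<longleftrightarrow> completion s br M C \<and> lie_ideal s br C"

text \<open>Ideal index eta(L:M) = dim(C / k(C)) = dim C - dim k(C) for an (any) ideal completion C.\<close>
definition ideal_index :: "('a::field \<Rightarrow> 'b::ab_group_add \<Rightarrow> 'b) \<Rightarrow> ('b \<Rightarrow> 'b \<Rightarrow> 'b) \<Rightarrow> 'b set \<Rightarrow> nat" where
  "ideal_index s br M = (let C = (SOME C. ideal_completion s br M C) in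
     vector_space.dim s C - vector_space.dim s (strict_core s br C))"

end

theory Submission
  imports Defs
begin

text \<open>Let \<open>C\<close> be an ideal completion of the maximal subalgebra \<open>M\<close>. Since \<open>C \<not>\<subseteq> M\<close> and
  \<open>M + C\<close> is a subalgebra, \<open>M + C = L\<close>, so \<open>dim (L/M) = dim (C/(M \<inter> C))\<close>; every ideal properly
  inside \<open>C\<close> lies in \<open>M \<inter> C\<close>, so \<open>k(C) \<subseteq> M \<inter> C\<close>, and the equation \<open>\<eta>(L:M) = dim (L/M)\<close> says
  exactly \<open>M \<inter> C \<subseteq> k(C)\<close>. If this holds, \<open>C\<close> itself witnesses that \<open>M\<close> is a c-ideal, as
  \<open>k(C) \<subseteq> M\<^sub>L\<close>. Conversely let \<open>L = M + D\<close> with \<open>M \<inter> D \<subseteq> M\<^sub>L\<close>. If \<open>C \<subseteq> D\<close> we are done;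
  otherwise \<open>C \<inter> D\<close> lies in \<open>M\<close>, hence in \<open>M\<^sub>L\<close>, so \<open>[C, D] \<subseteq> M\<^sub>L\<close> and \<open>C\<close> lies in the
  centraliser \<open>N\<close> of \<open>D\<close> modulo \<open>M\<^sub>L\<close>. By the Jacobi identity and \<open>L = M + D\<close>, \<open>M \<inter> N\<close> is an
  ideal, so \<open>M \<inter> C \<subseteq> M \<inter> N \<subseteq> M\<^sub>L\<close>, and \<open>M\<^sub>L \<inter> C\<close> is an ideal properly inside \<open>C\<close>.\<close>

definition centralizer_mod :: "('b \<Rightarrow> 'b \<Rightarrow> 'b) \<Rightarrow> 'b set \<Rightarrow> 'b set \<Rightarrow> 'b set" where
  "centralizer_mod br D K = {y. \<forall>d\<in>D. br y d \<in> K}"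

locale lie_alg =
  fixes s :: "'a::field \<Rightarrow> 'b::ab_group_add \<Rightarrow> 'b" and br :: "'b \<Rightarrow> 'b \<Rightarrow> 'b"
  assumes lie: "lie_algebra s br"
begin

sublocale vector_space s
  using lie by (simp add: lie_algebra_def)

lemma bracket_add_left: "br (x + y) z = br x z + br y z"
  and bracket_add_right: "br x (y + z) = br x y + br x z"
  and bracket_scale_left: "br (s a x) y = s a (br x y)"
  and bracket_scale_right: "br x (s a y) = s a (br x y)"
  and bracket_self: "br x x = 0"
  and jacobi: "br x (br y z) + br y (br z x) + br z (br x y) = 0"
  using lie by (simp_all add: lie_algebra_def)

lemma bracket_zero_left [simp]: "br 0 x = 0"
  and bracket_zero_right [simp]: "br x 0 = 0"
  using bracket_add_left[of 0 0 x] bracket_add_right[of x 0 0] by simp_all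

lemma bracket_anticomm: "br x y = - br y x"
proof -
  have "br (x + y) (x + y) = br x x + br x y + (br y x + br y y)"
    by (simp add: bracket_add_left bracket_add_right add.assoc)
  then have "br x y + br y x = 0"
    by (simp add: bracket_self)
  then show ?thesis
    by (simp add: add_eq_0_iff2)
qed

lemma jacobi_right: "br (br z y) d = br z (br y d) + br y (br d z)"
  using add_eq_0_iff2[THEN iffD1, OF jacobi[of z y d]]
  by (simp add: bracket_anticomm[of "br z y" d])

lemma lie_ideal_subspace: "lie_ideal s br I \<Longrightarrow> subspace I"
  by (simp add: lie_ideal_def)

lemma lie_subalgebra_subspace: "lie_subalgebra s br B \<Longrightarrow> subspace B"
  by (simp add: lie_subalgebra_def)

lemma maximal_subalgebra_subalgebra: "maximal_subalgebra s br M \<Longrightarrow> lie_subalgebra s br M"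
  by (simp add: maximal_subalgebra_def)

lemma lie_ideal_bracket_left: "lie_ideal s br I \<Longrightarrow> y \<in> I \<Longrightarrow> br x y \<in> I"
  by (simp add: lie_ideal_def)

lemma lie_ideal_bracket_right: "lie_ideal s br I \<Longrightarrow> y \<in> I \<Longrightarrow> br y x \<in> I"
  by (metis bracket_anticomm lie_ideal_bracket_left lie_ideal_subspace subspace_neg)

lemma lie_ideal_imp_subalgebra: "lie_ideal s br I \<Longrightarrow> lie_subalgebra s br I"
  by (simp add: lie_ideal_def lie_subalgebra_def)

lemma lie_ideal_UNIV: "lie_ideal s br UNIV"
  by (simp add: lie_ideal_def)

lemma lie_ideal_Int: "lie_ideal s br I \<Longrightarrow> lie_ideal s br J \<Longrightarrow> lie_ideal s br (I \<inter> J)"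
  by (simp add: lie_ideal_def subspace_inter)

lemma lie_ideal_span_Union:
  assumes "\<forall>I\<in>U. lie_ideal s br I"
  shows "lie_ideal s br (span (\<Union>U))"
  unfolding lie_ideal_def
proof (intro conjI allI ballI)
  fix x y
  assume "y \<in> span (\<Union>U)"
  then show "br x y \<in> span (\<Union>U)"
  proof (induct rule: span_induct)
    case base
    show ?case
      by (auto intro!: subspaceI span_zero span_add span_scale
          simp: bracket_add_right bracket_scale_right)
  next
    case (step z)
    then show ?case
      using assms lie_ideal_bracket_left by (blast intro: span_base)
  qed
qed (rule subspace_span)

lemma lie_core_ideal: "lie_ideal s br (lie_core s br B)"
  unfolding lie_core_def by (rule lie_ideal_span_Union) auto

lemma lie_core_subset: "subspace B \<Longrightarrow> lie_core s br B \<subseteq> B"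
  unfolding lie_core_def by (rule span_minimal) auto

lemma lie_ideal_subset_lie_core: "lie_ideal s br I \<Longrightarrow> I \<subseteq> B \<Longrightarrow> I \<subseteq> lie_core s br B"
  unfolding lie_core_def by (blast intro: span_base)

lemma strict_core_subspace: "subspace (strict_core s br X)"
  unfolding strict_core_def by (rule subspace_span)

lemma lie_ideal_psubset_strict_core: "lie_ideal s br I \<Longrightarrow> I \<subset> X \<Longrightarrow> I \<subseteq> strict_core s br X"
  unfolding strict_core_def by (blast intro: span_base)

lemma strict_core_subset:
  assumes "subspace S" and "\<And>I. lie_ideal s br I \<Longrightarrow> I \<subset> X \<Longrightarrow> I \<subseteq> S"
  shows "strict_core s br X \<subseteq> S"
  unfolding strict_core_def using assms by (intro span_minimal) auto

lemma sum_subalgebra_ideal: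
  assumes M: "lie_subalgebra s br M" and C: "lie_ideal s br C"
  shows "lie_subalgebra s br {x + y |x y. x \<in> M \<and> y \<in> C}"
  unfolding lie_subalgebra_def
proof (intro conjI ballI)
  have sM: "subspace M" and sC: "subspace C"
    using M C by (simp_all add: lie_subalgebra_def lie_ideal_subspace)
  then show "subspace {x + y |x y. x \<in> M \<and> y \<in> C}"
    by (rule subspace_sums)
  fix a b
  assume "a \<in> {x + y |x y. x \<in> M \<and> y \<in> C}" "b \<in> {x + y |x y. x \<in> M \<and> y \<in> C}"
  then obtain m1 c1 m2 c2 where a: "a = m1 + c1" "m1 \<in> M" "c1 \<in> C"
    and b: "b = m2 + c2" "m2 \<in> M" "c2 \<in> C"
    by blast
  have "br a b = br m1 m2 + (br m1 c2 + br c1 (m2 + c2))"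
    unfolding a b by (simp add: bracket_add_left bracket_add_right add.assoc)
  moreover have "br m1 m2 \<in> M"
    using M a(2) b(2) by (simp add: lie_subalgebra_def)
  moreover have "br m1 c2 + br c1 (m2 + c2) \<in> C"
    using C sC a(3) b(3) by (simp add: subspace_add lie_ideal_bracket_left lie_ideal_bracket_right)
  ultimately show "br a b \<in> {x + y |x y. x \<in> M \<and> y \<in> C}"
    by blast
qed

lemma maximal_sum_ideal_UNIV:
  assumes M: "maximal_subalgebra s br M" and C: "lie_ideal s br C" and CM: "\<not> C \<subseteq> M"
  shows "{x + y |x y. x \<in> M \<and> y \<in> C} = UNIV"
proof -
  let ?S = "{x + y |x y. x \<in> M \<and> y \<in> C}"
  have subM: "lie_subalgebra s br M"
    using M by (rule maximal_subalgebra_subalgebra)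
  have "0 \<in> M" and "0 \<in> C"
    using subM C by (simp_all add: lie_subalgebra_subspace lie_ideal_subspace subspace_0)
  have "M \<subseteq> ?S"
  proof
    fix m assume "m \<in> M"
    moreover have "m = m + 0"
      by simp
    ultimately show "m \<in> ?S"
      using \<open>0 \<in> C\<close> by blast
  qed
  moreover have "C \<subseteq> ?S"
  proof
    fix c assume "c \<in> C"
    moreover have "c = 0 + c"
      by simp
    ultimately show "c \<in> ?S"
      using \<open>0 \<in> M\<close> by blast
  qed
  ultimately have "?S \<noteq> M"
    using CM by blast
  with M \<open>M \<subseteq> ?S\<close> sum_subalgebra_ideal[OF subM C] show ?thesis
    unfolding maximal_subalgebra_def by blast
qed

lemma lie_ideal_Int_centralizer_mod:
  assumes M: "lie_subalgebra s br M" and D: "lie_ideal s br D"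
    and MD: "{x + y |x y. x \<in> M \<and> y \<in> D} = UNIV"
    and K: "lie_ideal s br K" and KM: "K \<subseteq> M"
  shows "lie_ideal s br (M \<inter> centralizer_mod br D K)"
  unfolding lie_ideal_def
proof (intro conjI allI ballI)
  have sM: "subspace M" and sK: "subspace K"
    using M K by (simp_all add: lie_subalgebra_def lie_ideal_subspace)
  have "subspace (centralizer_mod br D K)"
    unfolding centralizer_mod_def
    by (auto intro!: subspaceI simp: bracket_add_left bracket_scale_left
        subspace_0[OF sK] subspace_add[OF sK] subspace_scale[OF sK])
  with sM show "subspace (M \<inter> centralizer_mod br D K)"
    by (rule subspace_inter)
  fix z y
  assume y: "y \<in> M \<inter> centralizer_mod br D K"
  obtain m d0 where z: "z = m + d0" "m \<in> M" "d0 \<in> D"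
    using MD by blast
  have "br m y \<in> M"
    using M z(2) y by (simp add: lie_subalgebra_def)
  moreover have "br d0 y \<in> M"
    using y z(3) KM subspace_neg[OF sK] bracket_anticomm[of d0 y]
    by (auto simp: centralizer_mod_def)
  ultimately have "br z y \<in> M"
    unfolding z(1) by (simp add: bracket_add_left subspace_add[OF sM])
  moreover have "br (br z y) d \<in> K" if "d \<in> D" for d
  proof -
    have "br z (br y d) \<in> K"
      using y that K by (simp add: centralizer_mod_def lie_ideal_bracket_left)
    moreover have "br y (br d z) \<in> K"
      using y D that by (simp add: centralizer_mod_def lie_ideal_bracket_right)
    ultimately show ?thesis
      by (simp add: jacobi_right subspace_add[OF sK])
  qed
  ultimately show "br z y \<in> M \<inter> centralizer_mod br D K"
    by (simp add: centralizer_mod_def)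
qed

lemma ideal_completion_props:
  assumes "ideal_completion s br M C"
  shows "lie_ideal s br C" and "\<not> C \<subseteq> M"
    and "\<And>I. lie_ideal s br I \<Longrightarrow> I \<subset> C \<Longrightarrow> I \<subseteq> M"
  using assms lie_ideal_imp_subalgebra
  by (auto simp: ideal_completion_def completion_def)

lemma strict_core_completion_subset:
  assumes M: "maximal_subalgebra s br M" and C: "ideal_completion s br M C"
  shows "strict_core s br C \<subseteq> M \<inter> C"
  using ideal_completion_props[OF C]
  by (intro strict_core_subset subspace_inter lie_subalgebra_subspace
      maximal_subalgebra_subalgebra[OF M] lie_ideal_subspace) auto

lemma c_ideal_if_Int_subset_strict_core:
  assumes M: "maximal_subalgebra s br M" and C: "ideal_completion s br M C"
    and MC: "M \<inter> C \<subseteq> strict_core s br C"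
  shows "c_ideal s br M"
proof -
  note C' = ideal_completion_props[OF C]
  have "strict_core s br C \<subseteq> lie_core s br M"
    by (intro strict_core_subset lie_ideal_subspace lie_core_ideal lie_ideal_subset_lie_core C'(3))
  with MC have "M \<inter> C \<subseteq> lie_core s br M"
    by (rule subset_trans)
  with maximal_subalgebra_subalgebra[OF M] C'(1) maximal_sum_ideal_UNIV[OF M C'(1,2)]
  show ?thesis
    unfolding c_ideal_def by blast
qed

lemma Int_subset_strict_core_if_c_ideal:
  assumes M: "maximal_subalgebra s br M" and C: "ideal_completion s br M C"
    and cM: "c_ideal s br M"
  shows "M \<inter> C \<subseteq> strict_core s br C"
proof -
  note C' = ideal_completion_props[OF C]
  obtain D where D: "lie_ideal s br D" and MD: "{x + y |x y. x \<in> M \<and> y \<in> D} = UNIV"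
    and MDK: "M \<inter> D \<subseteq> lie_core s br M"
    using cM unfolding c_ideal_def by blast
  define K where "K = lie_core s br M"
  have subM: "lie_subalgebra s br M"
    using M by (rule maximal_subalgebra_subalgebra)
  have K: "lie_ideal s br K" and KM: "K \<subseteq> M"
    unfolding K_def using lie_core_ideal lie_core_subset[OF lie_subalgebra_subspace[OF subM]] by auto
  have MCK: "M \<inter> C \<subseteq> K"
  proof (cases "C \<subseteq> D")
    case True
    then show ?thesis
      using MDK unfolding K_def by blast
  next
    case False
    then have "C \<inter> D \<subseteq> K"
      using C'(3)[OF lie_ideal_Int[OF C'(1) D]] MDK unfolding K_def by blast
    then have "C \<subseteq> centralizer_mod br D K"
      using lie_ideal_bracket_left[OF D] lie_ideal_bracket_right[OF C'(1)]
      unfolding centralizer_mod_def by blast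
    moreover have "M \<inter> centralizer_mod br D K \<subseteq> K"
      using lie_ideal_subset_lie_core[OF lie_ideal_Int_centralizer_mod[OF subM D MD K KM] Int_lower1]
      unfolding K_def .
    ultimately show ?thesis
      by blast
  qed
  have "K \<inter> C \<subseteq> strict_core s br C"
    using C'(2) KM by (intro lie_ideal_psubset_strict_core lie_ideal_Int K C'(1)) blast
  with MCK show ?thesis
    by blast
qed

lemma c_ideal_iff_Int_subset_strict_core:
  assumes "maximal_subalgebra s br M" and "ideal_completion s br M C"
  shows "c_ideal s br M \<longleftrightarrow> M \<inter> C \<subseteq> strict_core s br C"
  using assms c_ideal_if_Int_subset_strict_core Int_subset_strict_core_if_c_ideal by blast

end

locale fin_dim_lie_alg = lie_alg +
  assumes fin: "fin_dim s"
begin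

lemma finite_basis_exists: "\<exists>B. finite B \<and> independent B \<and> span B = UNIV"
proof -
  obtain B where B: "finite B" "span B = UNIV"
    using fin by (auto simp: fin_dim_def)
  obtain B' where "B' \<subseteq> B" "independent B'" "B \<subseteq> span B'"
    using maximal_independent_subset by blast
  with B show ?thesis
    by (metis finite_subset span_mono span_span top.extremum_uniqueI)
qed

sublocale fd: finite_dimensional_vector_space s "SOME B. finite B \<and> independent B \<and> span B = UNIV"
  using someI_ex[OF finite_basis_exists] by unfold_locales auto

text \<open>An ideal not contained in \<open>M\<close> of least dimension is an ideal completion.\<close>

lemma ideal_completion_exists:
  assumes M: "maximal_subalgebra s br M"
  shows "\<exists>C. ideal_completion s br M C"
proof -
  let ?P = "\<lambda>C. lie_ideal s br C \<and> \<not> C \<subseteq> M"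
  have "?P UNIV"
    using M lie_ideal_UNIV by (auto simp: maximal_subalgebra_def)
  then obtain C where C: "?P C" and least: "\<And>D. ?P D \<Longrightarrow> dim C \<le> dim D"
    using ex_has_least_nat[of ?P UNIV dim] by blast
  have "D \<subseteq> M" if "lie_ideal s br D" "D \<subset> C" for D
  proof (rule ccontr)
    assume "\<not> D \<subseteq> M"
    with that C least have "D = C"
      by (intro fd.subspace_dim_equal lie_ideal_subspace) auto
    with that show False
      by blast
  qed
  with C show ?thesis
    unfolding ideal_completion_def completion_def using lie_ideal_imp_subalgebra by blast
qed

lemma ideal_completion_codim:
  assumes M: "maximal_subalgebra s br M" and C: "ideal_completion s br M C"
  shows "M \<inter> C \<subseteq> strict_core s br C
    \<longleftrightarrow> dim C - dim (strict_core s br C) = dim (UNIV :: 'b set) - dim M"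
proof -
  note C' = ideal_completion_props[OF C]
  let ?k = "strict_core s br C"
  have sM: "subspace M"
    using M by (intro lie_subalgebra_subspace maximal_subalgebra_subalgebra)
  have sC: "subspace C"
    using C'(1) by (rule lie_ideal_subspace)
  have k: "?k \<subseteq> M \<inter> C"
    using M C by (rule strict_core_completion_subset)
  have "dim (UNIV :: 'b set) + dim (M \<inter> C) = dim M + dim C"
    using fd.dim_sums_Int[OF sM sC] maximal_sum_ideal_UNIV[OF M C'(1,2)] by simp
  moreover have "dim ?k \<le> dim (M \<inter> C)"
    using k by (rule fd.dim_subset)
  moreover have "dim (M \<inter> C) \<le> dim C"
    by (rule fd.dim_subset) blast
  ultimately have "dim C - dim ?k = dim (UNIV :: 'b set) - dim M \<longleftrightarrow> dim ?k = dim (M \<inter> C)"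
    by linarith
  also have "\<dots> \<longleftrightarrow> ?k = M \<inter> C"
    using fd.subspace_dim_equal[OF strict_core_subspace subspace_inter[OF sM sC] k] by auto
  finally show ?thesis
    using k by blast
qed

end

theorem theorem2p5:
  fixes s :: "'a::field \<Rightarrow> 'b::ab_group_add \<Rightarrow> 'b"
    and br :: "'b \<Rightarrow> 'b \<Rightarrow> 'b"
    and M :: "'b set"
  assumes "lie_algebra s br"
    and "fin_dim s"
    and "maximal_subalgebra s br M"
  shows "c_ideal s br M \<longleftrightarrow>
           ideal_index s br M = vector_space.dim s (UNIV :: 'b set) - vector_space.dim s M"
proof -
  interpret fin_dim_lie_alg s br
    using assms(1,2) by unfold_locales
  define C where "C = (SOME C. ideal_completion s br M C)"
  have C: "ideal_completion s br M C"
    unfolding C_def using ideal_completion_exists[OF assms(3)] by (rule someI_ex)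
  have "ideal_index s br M = dim C - dim (strict_core s br C)"
    unfolding ideal_index_def C_def Let_def ..
  then show ?thesis
    unfolding c_ideal_iff_Int_subset_strict_core[OF assms(3) C] ideal_completion_codim[OF assms(3) C]
    by simp
qed

end
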